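(* For every $f\in\mathcal H^\infty_w$ one has $G_{\tilde\psi,\psi}C_{\tilde\psi}f=C_{\tilde\psi}f$, i.e. $\sum_{l\in X}\langle\psi_l,\tilde\psi_k\rangle\,\langle f,\tilde\psi_l\rangle_{\overline{\mathcal H},\mathcal H^{00}}=\langle f,\tilde\psi_k\rangle_{\overline{\mathcal H},\mathcal H^{00}}$ for all $k\in X$. In other words, $G_{\tilde\psi,\psi}$ restricted to the range $R(C_{\tilde\psi})$ is the identity of $R(C_{\tilde\psi})$.
   Context: Standing setting. $\mathcal H$ is a separable complex Hilbert space with inner product $\langle\cdot,\cdot\rangle$, linear in the first and conjugate-linear in the second argument. $X$ is a countable index set. A weight is a map $w:X\to(0,\infty)$; $\ell^\infty_w$ is the Banach space of sequences $\alpha=(\alpha_k)_{k\in X}$ with $\|\alpha\|_{\ell^\infty_w}:=\sup_{k\in X}|\alpha_k|w(k)<\infty$. $\psi=(\psi_k)_{k\in X}$ is a frame for $\mathcal H$ and $\tilde\psi=(\tilde\psi_k)_{k\in X}$ is a dual frame, i.e. $f=\sum_{k}\langle f,\tilde\psi_k\rangle\psi_k=\sum_k\langle f,\psi_k\rangle\tilde\psi_k$ for all $f\in\mathcal H$ (unconditional convergence in $\mathcal H$). The cross Gram matrix $G_{\tilde\psi,\psi}$ has entries $(G_{\tilde\psi,\psi})_{k,l}=\langle\psi_l,\tilde\psi_k\rangle$ and acts by $(G_{\tilde\psi,\psi}\alpha)_k=\sum_{l\in X}\langle\psi_l,\tilde\psi_k\rangle\alpha_l$; it is assumed to define a bounded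 operator on $\ell^\infty_w$, meaning these series converge absolutely for every $\alpha\in\ell^\infty_w$ and $G_{\tilde\psi,\psi}:\ell^\infty_w\to\ell^\infty_w$ is bounded (equivalently $\|G_{\tilde\psi,\psi}\|_{\mathcal B(\ell^\infty_w)}=\sup_{k}\sum_{l}|\langle\psi_l,\tilde\psi_k\rangle|\,w(k)/w(l)<\infty$). Let $\mathcal H^{00}:=\operatorname{span}\{\tilde\psi_k:k\in X\}$ (finite linear combinations), a dense subspace of $\mathcal H$. Equip $\mathcal H$ with the locally convex topology $\sigma(\mathcal H,\mathcal H^{00})$ generated by the seminorms $f\mapsto|\langle f,v\rangle|$, $v\in\mathcal H^{00}$ (Hausdorff and metrizable). Let $\overline{\mathcal H}$ be the completion of $\mathcal H$ in this topology, with $\mathcal H\subseteq\overline{\mathcal H}$, and for each $v\in\mathcal H^{00}$ let $f\mapsto\langle f,v\rangle_{\overline{\mathcal H},\mathcal H^{00}}$ be the unique continuous linear extension of $f\mapsto\langle f,v\rangle$ to $\overline{\mathcal H}$. Define $\mathcal H^\infty_w$ as the set of all $f\in\overline{\mathcal H}$ for which there is a sequence $(f_n)_{n\ge1}\subseteq\mathcal H$ converging to $f$ in $\sigma(\overline{\mathcal H},\mathcal H^{00})$ (i.e. $\langle f_n,v\rangle\to\langle f,v\rangle_{\overline{\mathcal H},\mathcal H^{00}}$ for all $v\in\mathcal H^{00}$) with $\sup_{n\in\mathbb N,k\in X}|\langle f_n,\tilde\psi_k\rangle|w(k)<\infty$. The coefficient operator is $C_{\tilde\psi}:\mathcal H^\infty_w\to\ell^\infty_w$,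 $C_{\tilde\psi}f=(\langle f,\tilde\psi_k\rangle_{\overline{\mathcal H},\mathcal H^{00}})_{k\in X}$, and $R(C_{\tilde\psi})$ denotes its range. *)

theory Defs
  imports "HOL-Analysis.Analysis"
begin

text \<open>HOL has no class of complex vector spaces; we equip a real Banach space with a
  complex scalar multiplication \<open>sm\<close> extending the real one.\<close>
definition complex_scaling :: "(complex \<Rightarrow> 'h::real_normed_vector \<Rightarrow> 'h) \<Rightarrow> bool" where
  "complex_scaling sm \<longleftrightarrow>
     (\<forall>r x. sm (complex_of_real r) x = r *\<^sub>R x) \<and>
     (\<forall>a b x. sm (a * b) x = sm a (sm b x)) \<and>
     (\<forall>a b x. sm (a + b) x = sm a x + sm b x) \<and>
     (\<forall>a x y. sm a (x + y) = sm a x + sm a y)"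

definition complex_inner_product :: "(complex \<Rightarrow> 'h::real_normed_vector \<Rightarrow> 'h) \<Rightarrow> ('h \<Rightarrow> 'h \<Rightarrow> complex) \<Rightarrow> bool" where
  "complex_inner_product sm ip \<longleftrightarrow>
     (\<forall>x y z. ip (x + y) z = ip x z + ip y z) \<and>
     (\<forall>c x y. ip (sm c x) y = c * ip x y) \<and>
     (\<forall>x y. ip y x = cnj (ip x y)) \<and>
     (\<forall>x. ip x x = complex_of_real ((norm x)\<^sup>2))"

definition separable_hilbert :: "(complex \<Rightarrow> 'h::{real_normed_vector,banach} \<Rightarrow> 'h) \<Rightarrow> ('h \<Rightarrow> 'h \<Rightarrow> complex) \<Rightarrow> bool" where
  "separable_hilbert sm ip \<longleftrightarrow> complex_scaling sm \<and> complex_inner_product sm ip \<and>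
     (\<exists>D::'h set. countable D \<and> closure D = UNIV)"

definition is_frame :: "('h::real_normed_vector \<Rightarrow> 'h \<Rightarrow> complex) \<Rightarrow> ('x \<Rightarrow> 'h) \<Rightarrow> bool" where
  "is_frame ip \<psi> \<longleftrightarrow> (\<exists>A B. 0 < A \<and> 0 < B \<and>
     (\<forall>f. (\<lambda>k. (cmod (ip f (\<psi> k)))\<^sup>2) summable_on UNIV \<and>
          A * (norm f)\<^sup>2 \<le> (\<Sum>\<^sub>\<infinity>k. (cmod (ip f (\<psi> k)))\<^sup>2) \<and>
          (\<Sum>\<^sub>\<infinity>k. (cmod (ip f (\<psi> k)))\<^sup>2) \<le> B * (norm f)\<^sup>2))"

definition is_dual_frame :: "(complex \<Rightarrow> 'h::real_normed_vector \<Rightarrow> 'h) \<Rightarrow> ('h \<Rightarrow> 'h \<Rightarrow> complex) \<Rightarrow> ('x \<Rightarrow> 'h) \<Rightarrow> ('x \<Rightarrow> 'h) \<Rightarrow> bool" where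
  "is_dual_frame sm ip \<psi> \<psi>d \<longleftrightarrow> is_frame ip \<psi> \<and> is_frame ip \<psi>d \<and>
     (\<forall>f. ((\<lambda>k. sm (ip f (\<psi>d k)) (\<psi> k)) has_sum f) UNIV \<and>
          ((\<lambda>k. sm (ip f (\<psi> k)) (\<psi>d k)) has_sum f) UNIV)"

definition gram :: "('h \<Rightarrow> 'h \<Rightarrow> complex) \<Rightarrow> ('x \<Rightarrow> 'h) \<Rightarrow> ('x \<Rightarrow> 'h) \<Rightarrow> 'x \<Rightarrow> 'x \<Rightarrow> complex" where
  "gram ip \<psi>d \<psi> k l = ip (\<psi> l) (\<psi>d k)"

definition gram_bounded_linf_w :: "('h \<Rightarrow> 'h \<Rightarrow> complex) \<Rightarrow> ('x \<Rightarrow> 'h) \<Rightarrow> ('x \<Rightarrow> 'h) \<Rightarrow> ('x \<Rightarrow> real) \<Rightarrow> bool" where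
  "gram_bounded_linf_w ip \<psi>d \<psi> w \<longleftrightarrow> (\<exists>M. \<forall>k.
     (\<lambda>l. cmod (gram ip \<psi>d \<psi> k l) * w k / w l) summable_on UNIV \<and>
     (\<Sum>\<^sub>\<infinity>l. cmod (gram ip \<psi>d \<psi> k l) * w k / w l) \<le> M)"

definition H00 :: "(complex \<Rightarrow> 'h::real_vector \<Rightarrow> 'h) \<Rightarrow> ('x \<Rightarrow> 'h) \<Rightarrow> 'h set" where
  "H00 sm \<psi>d = {\<Sum>k\<in>S. sm (c k) (\<psi>d k) | S c. finite S}"

text \<open>Elements of the completion of \<open>(H, \<sigma>(H,H^{00}))\<close> are represented by their extended
  pairings \<open>F v = \<langle>f, v\<rangle>_{\<bar>H\<bar>,H^{00}}\<close>, \<open>v \<in> H^{00}\<close>.  \<open>F\<close> represents an element of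
  \<open>H^\<infinity>_w\<close> iff it is the \<open>\<sigma>(\<bar>H\<bar>,H^{00})\<close>-limit of a sequence \<open>f_n\<close> in \<open>H\<close> with
  \<open>sup_{n,k} |\<langle>f_n, \<psi>d_k\<rangle>| w(k) < \<infinity>\<close>.\<close>
definition in_H_inf_w :: "(complex \<Rightarrow> 'h::real_vector \<Rightarrow> 'h) \<Rightarrow> ('h \<Rightarrow> 'h \<Rightarrow> complex) \<Rightarrow> ('x \<Rightarrow> 'h) \<Rightarrow> ('x \<Rightarrow> real) \<Rightarrow> ('h \<Rightarrow> complex) \<Rightarrow> bool" where
  "in_H_inf_w sm ip \<psi>d w F \<longleftrightarrow> (\<exists>fs :: nat \<Rightarrow> 'h.
     (\<forall>v\<in>H00 sm \<psi>d. (\<lambda>n. ip (fs n) v) \<longlonglongrightarrow> F v) \<and>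
     (\<exists>C. \<forall>n k. cmod (ip (fs n) (\<psi>d k)) * w k \<le> C))"

definition coeff_op :: "('x \<Rightarrow> 'h) \<Rightarrow> ('h \<Rightarrow> complex) \<Rightarrow> 'x \<Rightarrow> complex" where
  "coeff_op \<psi>d F k = F (\<psi>d k)"

end

theory Submission
  imports Defs
begin

text \<open>Each approximant \<open>f\<^sub>n \<in> H\<close> satisfies the identity exactly: pairing the dual frame expansion
  \<open>f\<^sub>n = \<Sum>\<^sub>l \<langle>f\<^sub>n, \<psi>d\<^sub>l\<rangle> \<psi>\<^sub>l\<close> with \<open>\<psi>d\<^sub>k\<close> (the inner product is continuous) gives
  \<open>\<Sum>\<^sub>l G\<^sub>k\<^sub>l \<langle>f\<^sub>n, \<psi>d\<^sub>l\<rangle> = \<langle>f\<^sub>n, \<psi>d\<^sub>k\<rangle>\<close>.  Both sides converge termwise to the pairings with \<open>F\<close>,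
  and the uniform weighted bound \<open>|\<langle>f\<^sub>n, \<psi>d\<^sub>l\<rangle>| \<le> C / w l\<close> together with the boundedness of
  the Gram matrix on \<open>\<ell>\<^sup>\<infinity>\<^sub>w\<close> supplies a summable majorant \<open>C |G\<^sub>k\<^sub>l| / w l\<close>, so dominated
  convergence passes the identity to the limit.\<close>

lemma has_sum_dominated_convergence:
  fixes b :: "nat \<Rightarrow> 'a \<Rightarrow> 'b::{banach, second_countable_topology}"
  assumes sums: "\<And>n. (b n has_sum s n) UNIV"
    and termwise: "\<And>l. (\<lambda>n. b n l) \<longlonglongrightarrow> c l"
    and dominated: "\<And>n l. norm (b n l) \<le> g l"
    and majorant: "g summable_on UNIV"
    and sums_lim: "s \<longlonglongrightarrow> S"
  shows "(c has_sum S) UNIV"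
proof -
  note abs_summable = abs_summable_equivalent[unfolded Infinite_Set_Sum.abs_summable_on_def]
  note infsetsum_eq = infsetsum_infsum[unfolded Infinite_Set_Sum.abs_summable_on_def]
  have "g l \<ge> 0" for l using dominated[of 0 l] norm_ge_zero order_trans by blast
  with majorant have "(\<lambda>l. norm (g l)) summable_on UNIV" by simp
  then have int_g: "integrable (count_space UNIV) g"
    using abs_summable by blast
  note dominated_convergence = int_g termwise dominated AE_I2
  then have lim: "(\<lambda>n. integral\<^sup>L (count_space UNIV) (b n)) \<longlonglongrightarrow> integral\<^sup>L (count_space UNIV) c"
    by (intro integral_dominated_convergence[where w=g]) auto
  have int_c: "integrable (count_space UNIV) c"
    using dominated_convergence by (intro integrable_dominated_convergence[where w=g and s=b]) auto
  have int_b: "integrable (count_space UNIV) (b n)" for n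
    using dominated_convergence by (intro integrable_dominated_convergence2[where w=g and f=c]) auto
  have "integral\<^sup>L (count_space UNIV) (b n) = s n" for n
    using infsetsum_eq[OF int_b] sums[of n] infsumI unfolding infsetsum_def by metis
  with lim sums_lim have "integral\<^sup>L (count_space UNIV) c = S"
    using LIMSEQ_unique by auto
  moreover have "c summable_on UNIV"
    using int_c abs_summable abs_summable_summable by blast
  ultimately show ?thesis
    using infsetsum_eq[OF int_c] unfolding infsetsum_def by (metis has_sum_infsum)
qed

lemma additive_complex_inner_left:
  assumes "complex_inner_product sm ip"
  shows "Modules.additive (\<lambda>x. ip x z)"
  using assms unfolding complex_inner_product_def by unfold_locales blast

lemma complex_inner_commute:
  "complex_inner_product sm ip \<Longrightarrow> ip y x = cnj (ip x y)"
  unfolding complex_inner_product_def by blast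

lemma complex_inner_scale_left:
  "complex_inner_product sm ip \<Longrightarrow> ip (sm c x) y = c * ip x y"
  unfolding complex_inner_product_def by blast

lemma additive_complex_inner_right:
  assumes "complex_inner_product sm ip"
  shows "Modules.additive (\<lambda>x. ip z x)"
proof
  fix x y
  interpret additive "\<lambda>x. ip x z" by (rule additive_complex_inner_left[OF assms])
  show "ip z (x + y) = ip z x + ip z y"
    using add complex_inner_commute[OF assms] by (metis complex_cnj_add)
qed

lemma complex_inner_polarization_Re:
  assumes ip: "complex_inner_product sm ip"
  shows "Re (ip x y) = ((norm (x + y))\<^sup>2 - (norm (x - y))\<^sup>2) / 4"
proof -
  interpret left: additive "\<lambda>x. ip x z" for z by (rule additive_complex_inner_left[OF ip])
  interpret right: additive "\<lambda>x. ip z x" for z by (rule additive_complex_inner_right[OF ip])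
  have norm_sq: "complex_of_real ((norm u)\<^sup>2) = ip u u" for u
    using ip unfolding complex_inner_product_def by metis
  have "complex_of_real ((norm (x + y))\<^sup>2 - (norm (x - y))\<^sup>2)
      = (ip x x + ip y x + (ip x y + ip y y)) - (ip x x - ip y x - (ip x y - ip y y))"
    by (simp only: of_real_diff norm_sq left.add right.add left.diff right.diff)
  also have "\<dots> = 2 * ip x y + 2 * ip y x"
    by (simp add: algebra_simps)
  also have "\<dots> = 2 * ip x y + 2 * cnj (ip x y)"
    using complex_inner_commute[OF ip, of x y] by simp
  finally have "(norm (x + y))\<^sup>2 - (norm (x - y))\<^sup>2 = Re (2 * ip x y + 2 * cnj (ip x y))"
    by (metis Re_complex_of_real)
  then show ?thesis by simp
qed

lemma complex_inner_Im:
  assumes ip: "complex_inner_product sm ip"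
  shows "Im (ip x y) = Re (ip x (sm \<i> y))"
proof -
  have "ip x (sm \<i> y) = cnj (\<i> * ip y x)"
    using complex_inner_commute[OF ip, of "sm \<i> y" x] complex_inner_scale_left[OF ip, of \<i> y x]
    by simp
  also have "\<dots> = - \<i> * ip x y"
    by (simp add: complex_inner_commute[OF ip, of y x])
  finally show ?thesis by simp
qed

lemma isCont_complex_inner_left:
  assumes ip: "complex_inner_product sm ip"
  shows "isCont (\<lambda>x. ip x y) x0"
proof -
  have polarization: "(\<lambda>x. ip x y) = (\<lambda>x. complex_of_real (((norm (x + y))\<^sup>2 - (norm (x - y))\<^sup>2) / 4)
     + \<i> * complex_of_real (((norm (x + sm \<i> y))\<^sup>2 - (norm (x - sm \<i> y))\<^sup>2) / 4))"
    by (intro ext complex_eqI)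
      (simp_all add: complex_inner_polarization_Re[OF ip] complex_inner_Im[OF ip, of _ y]
        del: of_real_diff of_real_divide)
  show ?thesis
    unfolding polarization by (intro continuous_intros) simp_all
qed

lemma has_sum_complex_inner_left:
  assumes "complex_inner_product sm ip" and "(g has_sum s) A"
  shows "((\<lambda>l. ip (g l) y) has_sum ip s y) A"
  using has_sum_comm_additive[OF additive_complex_inner_left[OF assms(1)] _ assms(2)]
    isCont_complex_inner_left[OF assms(1)]
  by (simp add: isCont_def o_def)

lemma gram_fixes_coefficients:
  assumes "complex_inner_product sm ip" and "is_dual_frame sm ip \<psi> \<psi>d"
  shows "((\<lambda>l. gram ip \<psi>d \<psi> k l * ip f (\<psi>d l)) has_sum ip f (\<psi>d k)) UNIV"
proof -
  have "((\<lambda>l. sm (ip f (\<psi>d l)) (\<psi> l)) has_sum f) UNIV"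
    using assms(2) unfolding is_dual_frame_def by blast
  from has_sum_complex_inner_left[OF assms(1) this, of "\<psi>d k"]
  show ?thesis
    by (simp add: complex_inner_scale_left[OF assms(1)] gram_def mult.commute)
qed

lemma generator_in_H00:
  assumes "complex_scaling sm"
  shows "\<psi>d l \<in> H00 sm \<psi>d"
proof -
  have "sm (complex_of_real 1) (\<psi>d l) = \<psi>d l"
    using assms unfolding complex_scaling_def by (metis scaleR_one)
  then show ?thesis
    unfolding H00_def by (auto intro!: exI[of _ "{l}"] exI[of _ "\<lambda>_. 1"])
qed

lemma gram_weighted_majorant:
  assumes w: "w k > 0" "w l > 0"
    and bound: "cmod a * w l \<le> C"
  shows "cmod (gram ip \<psi>d \<psi> k l * a) \<le> cmod (gram ip \<psi>d \<psi> k l) * w k / w l * (C / w k)"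
proof -
  have "cmod a \<le> C / w l"
    using bound w by (simp add: pos_le_divide_eq)
  then have "cmod (gram ip \<psi>d \<psi> k l * a) \<le> cmod (gram ip \<psi>d \<psi> k l) * (C / w l)"
    unfolding norm_mult by (rule mult_left_mono) simp
  also have "\<dots> = cmod (gram ip \<psi>d \<psi> k l) * w k / w l * (C / w k)"
    using w by (simp add: field_simps)
  finally show ?thesis .
qed

theorem mainTheorem7:
  fixes sm :: "complex \<Rightarrow> 'h::{real_normed_vector,banach} \<Rightarrow> 'h"
    and ip :: "'h \<Rightarrow> 'h \<Rightarrow> complex"
    and \<psi> \<psi>d :: "'x::countable \<Rightarrow> 'h"
    and w :: "'x \<Rightarrow> real"
    and F :: "'h \<Rightarrow> complex"
  assumes "separable_hilbert sm ip"
    and "\<forall>k. w k > 0"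
    and "is_dual_frame sm ip \<psi> \<psi>d"
    and "gram_bounded_linf_w ip \<psi>d \<psi> w"
    and "in_H_inf_w sm ip \<psi>d w F"
  shows "\<forall>k. ((\<lambda>l. gram ip \<psi>d \<psi> k l * coeff_op \<psi>d F l) has_sum coeff_op \<psi>d F k) UNIV"
proof
  fix k
  have scaling: "complex_scaling sm" and ip: "complex_inner_product sm ip"
    using assms(1) unfolding separable_hilbert_def by auto
  obtain fs C where lim: "\<forall>v\<in>H00 sm \<psi>d. (\<lambda>n. ip (fs n) v) \<longlonglongrightarrow> F v"
    and bound: "\<forall>n l. cmod (ip (fs n) (\<psi>d l)) * w l \<le> C"
    using assms(5) unfolding in_H_inf_w_def by blast
  obtain M where "\<forall>k. (\<lambda>l. cmod (gram ip \<psi>d \<psi> k l) * w k / w l) summable_on UNIV \<and>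
     (\<Sum>\<^sub>\<infinity>l. cmod (gram ip \<psi>d \<psi> k l) * w k / w l) \<le> M"
    using assms(4) unfolding gram_bounded_linf_w_def by blast
  then have majorant: "(\<lambda>l. cmod (gram ip \<psi>d \<psi> k l) * w k / w l * (C / w k)) summable_on UNIV"
    using summable_on_cmult_left by blast
  have coeff_lim: "(\<lambda>n. ip (fs n) (\<psi>d l)) \<longlonglongrightarrow> coeff_op \<psi>d F l" for l
    unfolding coeff_op_def by (rule lim[rule_format, OF generator_in_H00[OF scaling]])
  show "((\<lambda>l. gram ip \<psi>d \<psi> k l * coeff_op \<psi>d F l) has_sum coeff_op \<psi>d F k) UNIV"
  proof (rule has_sum_dominated_convergence)
    show "((\<lambda>l. gram ip \<psi>d \<psi> k l * ip (fs n) (\<psi>d l)) has_sum ip (fs n) (\<psi>d k)) UNIV" for n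
      by (rule gram_fixes_coefficients[OF ip assms(3)])
    show "(\<lambda>n. gram ip \<psi>d \<psi> k l * ip (fs n) (\<psi>d l)) \<longlonglongrightarrow> gram ip \<psi>d \<psi> k l * coeff_op \<psi>d F l" for l
      by (intro tendsto_mult_left coeff_lim)
    show "cmod (gram ip \<psi>d \<psi> k l * ip (fs n) (\<psi>d l))
        \<le> cmod (gram ip \<psi>d \<psi> k l) * w k / w l * (C / w k)" for n l
      using assms(2) bound by (intro gram_weighted_majorant) auto
  qed (fact majorant coeff_lim)+
qed

end
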